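(* Let $\{f_t\}_{t\in[0,\varepsilon]}$ be a Misiurewicz-rooted unimodal family on $I=[-1,1]$. There exists $\theta_0>0$ such that for every $\theta\in(0,\theta_0)$ and every sufficiently small $t$ the following holds. Let $U_0,U_1$ be open intervals with $0\in U_1\subset U_0\subset(-\theta,\theta)$, such that for $j=0,1$, $f_t(\partial U_j)$ is a single point preperiodic for $f_t$, $f_t^k(\partial U_j)\notin U_0$ for all $k\ge1$, and $|U_1|\le\theta\,\mathrm{dist}(U_1,\partial U_0)$. Suppose that either $0$ never returns to $U_0$ under $f_t$, or the first return of $0$ to $U_0$ lies in $U_1$. Let $\phi_1$ be the first return map of $f_t$ to $U_1$ and let $W$ be a non-central branch of $\phi_1$, with $\phi_1=f_t^n$ on $W$. Then there is an open interval $\hat W$ with $W\subset\hat W\subset U_1$ mapped diffeomorphically by $f_t^n$ onto $U_0$; if $\phi_1$ has a central branch, $\hat W$ is disjoint from it; and $|D\phi_1|\ge5$ on the non-central branches.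
   Context: The first return time to $U_1$ is $r(x)=\inf\{k\ge1\colon f_t^k(x)\in U_1\}$ and $\phi_1(x)=f_t^{r(x)}(x)$; a branch of $\phi_1$ is a maximal open interval on which $r$ is constant (and finite); a branch containing $0$ is called central. A map $f\colon I\to I$ is S-unimodal with critical point $0$ if it is $C^2$, $0$ is its unique turning point and unique point with $f'=0$, $|f'|^{-1/2}$ is convex on each component of $I\setminus\{0\}$, $f(\partial I)\subset\partial I$ and $|f'|>1$ on $\partial I$; non-degenerate if $f''(0)\ne0$. A Misiurewicz-rooted unimodal family is a family $\{f_t\}_{t\in[0,\varepsilon]}$ of non-degenerate S-unimodal maps of $I$ with critical point $0$, with $f_0$ Misiurewicz (the closure of $\{f_0^n(f_0(0))\}_{n\ge0}$ is compact forward-invariant with $|(f_0^k)'|\ge2$ on it for some $k$), and $(x,t)\mapsto f_t(x)$ of class $C^2$. *)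

theory Defs
  imports "HOL-Analysis.Analysis"
begin

abbreviation II :: "real set" where "II \<equiv> {-1..1}"

definition C2_on :: "('a::real_normed_vector \<Rightarrow> real) \<Rightarrow> 'a set \<Rightarrow> bool" where
  "C2_on F S \<longleftrightarrow>
     (\<exists>(DF :: 'a \<Rightarrow> ('a \<Rightarrow>\<^sub>L real)) (DDF :: 'a \<Rightarrow> ('a \<Rightarrow>\<^sub>L ('a \<Rightarrow>\<^sub>L real))).
        (\<forall>z\<in>S. (F has_derivative blinfun_apply (DF z)) (at z within S)) \<and>
        (\<forall>z\<in>S. (DF has_derivative blinfun_apply (DDF z)) (at z within S)) \<and>
        continuous_on S DDF)"

definition S_unimodal :: "(real \<Rightarrow> real) \<Rightarrow> bool" where
  "S_unimodal f \<longleftrightarrow>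
     f ` II \<subseteq> II \<and>
     (\<exists>f' f''.
        (\<forall>x\<in>II. (f has_real_derivative f' x) (at x within II)) \<and>
        (\<forall>x\<in>II. (f' has_real_derivative f'' x) (at x within II)) \<and>
        continuous_on II f'' \<and>
        ((mono_on {-1..0} f \<and> antimono_on {0..1} f) \<or>
         (antimono_on {-1..0} f \<and> mono_on {0..1} f)) \<and>
        (\<forall>x\<in>II. f' x = 0 \<longleftrightarrow> x = 0) \<and>
        convex_on {-1..<0} (\<lambda>x. inverse (sqrt \<bar>f' x\<bar>)) \<and>
        convex_on {0<..1} (\<lambda>x. inverse (sqrt \<bar>f' x\<bar>)) \<and>
        f (-1) \<in> {-1, 1} \<and> f 1 \<in> {-1, 1} \<and>
        \<bar>f' (-1)\<bar> > 1 \<and> \<bar>f' 1\<bar> > 1)"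

definition nondegenerate :: "(real \<Rightarrow> real) \<Rightarrow> bool" where
  "nondegenerate f \<longleftrightarrow> (\<exists>d. (deriv f has_real_derivative d) (at 0) \<and> d \<noteq> 0)"

definition misiurewicz :: "(real \<Rightarrow> real) \<Rightarrow> bool" where
  "misiurewicz f \<longleftrightarrow>
     (let K = closure {(f ^^ n) (f 0) | n. True} in
       compact K \<and> f ` K \<subseteq> K \<and>
       (\<exists>k. \<forall>x\<in>K. \<exists>d. ((f ^^ k) has_real_derivative d) (at x within II) \<and> \<bar>d\<bar> \<ge> 2))"

definition misiurewicz_rooted_family :: "(real \<Rightarrow> real \<Rightarrow> real) \<Rightarrow> real \<Rightarrow> bool" where
  "misiurewicz_rooted_family f \<epsilon> \<longleftrightarrow>
     \<epsilon> > 0 \<and>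
     (\<forall>t\<in>{0..\<epsilon>}. S_unimodal (f t) \<and> nondegenerate (f t)) \<and>
     misiurewicz (f 0) \<and>
     C2_on (\<lambda>p. f (snd p) (fst p)) (II \<times> {0..\<epsilon>})"

definition open_interval :: "real set \<Rightarrow> bool" where
  "open_interval W \<longleftrightarrow> (\<exists>a b. a < b \<and> W = {a<..<b})"

definition preperiodic :: "(real \<Rightarrow> real) \<Rightarrow> real \<Rightarrow> bool" where
  "preperiodic f p \<longleftrightarrow> (\<exists>m n. n \<ge> 1 \<and> (f ^^ (m + n)) p = (f ^^ m) p)"

definition returns :: "(real \<Rightarrow> real) \<Rightarrow> real set \<Rightarrow> real \<Rightarrow> bool" where
  "returns f U x \<longleftrightarrow> (\<exists>k\<ge>1. (f ^^ k) x \<in> U)"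

definition ret_time :: "(real \<Rightarrow> real) \<Rightarrow> real set \<Rightarrow> real \<Rightarrow> nat" where
  "ret_time f U x = (LEAST k. k \<ge> 1 \<and> (f ^^ k) x \<in> U)"

definition first_return :: "(real \<Rightarrow> real) \<Rightarrow> real set \<Rightarrow> real \<Rightarrow> real" where
  "first_return f U x = (f ^^ ret_time f U x) x"

definition const_ret_interval :: "(real \<Rightarrow> real) \<Rightarrow> real set \<Rightarrow> real set \<Rightarrow> bool" where
  "const_ret_interval f U W \<longleftrightarrow>
     open_interval W \<and> W \<subseteq> U \<and> (\<forall>x\<in>W. returns f U x) \<and>
     (\<exists>n. \<forall>x\<in>W. ret_time f U x = n)"

definition is_branch :: "(real \<Rightarrow> real) \<Rightarrow> real set \<Rightarrow> real set \<Rightarrow> bool" where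
  "is_branch f U W \<longleftrightarrow> const_ret_interval f U W \<and>
     (\<forall>W'. const_ret_interval f U W' \<and> W \<subseteq> W' \<longrightarrow> W' = W)"

end

(* Let n be the return time on the non-central branch W, and let the extension of W be the
   component of U1 \<inter> (f^n)^-1(U0) containing W. The boundary points of U0 and U1 never enter U0
   again, so no orbit starting in the extension visits U1 before time n, and the extension does
   not contain the critical point (otherwise W could be enlarged across 0, contradicting its
   maximality). Hence f^n maps the extension diffeomorphically onto U0, and a central branch
   meeting it would contain one of its endpoints, whose orbit never enters U1.
   Convexity of |f'|^(-1/2) on both laps (negative Schwarzian derivative) survives composition,
   so |Df^n|^(-1/2) is convex on the extension. At x \<in> W, |Df^n| is therefore at most |Df^n(x)|
   on one side of x, and the mean value theorem on that side gives
   |U1| * |Df^n(x)| \<ge> dist(U1, \<partial>U0) \<ge> |U1| / \<theta>, i.e. |D\<phi>\<^sub>1(x)| \<ge> 1/\<theta> > 5. *)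

theory Submission
  imports Defs
begin

section \<open>Convexity of inverse square roots of derivatives\<close>

lemma convex_on_derivative_mono:
  fixes u :: "real \<Rightarrow> real"
  assumes conv: "convex_on A u" and A: "open A" "connected A"
    and xy: "x \<in> A" "y \<in> A" "x \<le> y"
    and "(u has_real_derivative ux) (at x)" "(u has_real_derivative uy) (at y)"
  shows "ux \<le> uy"
proof (cases "x = y")
  case True
  then show ?thesis using assms DERIV_unique by blast
next
  case False
  have "ux * (y - x) \<le> u y - u x"
    using A xy assms(7) by (intro convex_on_imp_above_tangent[OF conv]) (auto simp: interior_open has_field_derivative_at_within)
  moreover have "uy * (x - y) \<le> u x - u y"
    using A xy assms(8) by (intro convex_on_imp_above_tangent[OF conv]) (auto simp: interior_open has_field_derivative_at_within)
  ultimately have "ux * (y - x) \<le> uy * (y - x)" by (simp add: algebra_simps)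
  then show ?thesis using False xy by simp
qed

lemma convex_on_mult_if_deriv_inverse_square:
  fixes u u' p :: "real \<Rightarrow> real" and \<gamma> :: real
  assumes J: "connected J"
    and u_pos: "\<And>x. x \<in> J \<Longrightarrow> u x > 0"
    and u_deriv: "\<And>x. x \<in> J \<Longrightarrow> (u has_real_derivative u' x) (at x)"
    and u'_mono: "\<And>x y. x \<in> J \<Longrightarrow> y \<in> J \<Longrightarrow> x \<le> y \<Longrightarrow> u' x \<le> u' y"
    and p_deriv: "\<And>x. x \<in> J \<Longrightarrow> (p has_real_derivative \<gamma> / (u x)\<^sup>2) (at x)"
    and p_pos: "\<And>x. x \<in> J \<Longrightarrow> p x > 0"
  shows "convex_on J (\<lambda>x. p x * u x)"
proof (rule convex_on_realI[where f' = "\<lambda>x. \<gamma> / u x + p x * u' x"])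
  show "connected J" by (fact J)
  fix x assume "x \<in> J"
  then show "((\<lambda>x. p x * u x) has_real_derivative \<gamma> / u x + p x * u' x) (at x)"
    using p_deriv u_deriv u_pos by (auto intro!: derivative_eq_intros simp: power2_eq_square)
next
  fix x y assume x: "x \<in> J" and y: "y \<in> J" and "x \<le> y"
  have Icc_J: "{x..y} \<subseteq> J" by (rule connected_contains_Icc[OF J x y])
  have shift: "p x * a + \<gamma> / u x \<le> p y * a + \<gamma> / u y"
    if "\<And>t. t \<in> {x..y} \<Longrightarrow> \<gamma> * (a - u' t) \<ge> 0" for a
  proof (rule DERIV_nonneg_imp_nondecreasing[OF \<open>x \<le> y\<close>])
    fix t assume "x \<le> t" "t \<le> y"
    then have t: "t \<in> J" "\<gamma> * (a - u' t) \<ge> 0" using Icc_J that by auto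
    have "((\<lambda>t. p t * a + \<gamma> / u t) has_real_derivative \<gamma> * (a - u' t) / (u t)\<^sup>2) (at t)"
      using p_deriv[OF t(1)] u_deriv[OF t(1)] u_pos[OF t(1)]
      by (auto intro!: derivative_eq_intros simp: field_simps power2_eq_square)
    then show "\<exists>D. ((\<lambda>t. p t * a + \<gamma> / u t) has_real_derivative D) (at t) \<and> D \<ge> 0"
      using t(2) by auto
  qed
  have u'_xy: "u' x \<le> u' t" "u' t \<le> u' y" if "t \<in> {x..y}" for t
    using that Icc_J u'_mono x y by auto
  show "\<gamma> / u x + p x * u' x \<le> \<gamma> / u y + p y * u' y"
  proof (cases "\<gamma> \<le> 0")
    case True
    have "p x * u' x + \<gamma> / u x \<le> p y * u' x + \<gamma> / u y"
      by (rule shift) (use True u'_xy in \<open>auto intro: mult_nonpos_nonpos\<close>)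
    moreover have "p y * u' x \<le> p y * u' y" using u'_mono[OF x y \<open>x \<le> y\<close>] p_pos[OF y] by simp
    ultimately show ?thesis by simp
  next
    case False
    have "p x * u' y + \<gamma> / u x \<le> p y * u' y + \<gamma> / u y"
      by (rule shift) (use False u'_xy in auto)
    moreover have "p x * u' x \<le> p x * u' y" using u'_mono[OF x y \<open>x \<le> y\<close>] p_pos[OF x] by simp
    ultimately show ?thesis by simp
  qed
qed

text \<open>If g had a positive maximum, a support line at its leftmost maximum point would have to be
  horizontal, producing a maximum point further left.\<close>

lemma nonpos_if_local_support_lines:
  fixes g :: "real \<Rightarrow> real"
  assumes cont: "continuous_on {a..b} g" and ends: "g a \<le> 0" "g b \<le> 0"
    and support: "\<And>s. s \<in> {a<..<b} \<Longrightarrow>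
      \<exists>m \<delta>. \<delta> > 0 \<and> (\<forall>x\<in>{a..b}. \<bar>x - s\<bar> < \<delta> \<longrightarrow> g s + m * (x - s) \<le> g x)"
    and x: "x \<in> {a..b}"
  shows "g x \<le> 0"
proof (rule ccontr)
  assume "\<not> g x \<le> 0"
  have "{a..b} \<noteq> {}" using x by auto
  then obtain xm where xm: "xm \<in> {a..b}" "\<And>y. y \<in> {a..b} \<Longrightarrow> g y \<le> g xm"
    using continuous_attains_sup[OF compact_Icc _ cont] by blast
  define M where "M = g xm"
  have "M > 0" using xm(2)[OF x] \<open>\<not> g x \<le> 0\<close> by (simp add: M_def)
  define S where "S = {y \<in> {a..b}. g y = M}"
  have "closed S"
    unfolding S_def by (rule continuous_closed_preimage_constant[OF cont closed_atLeastAtMost])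
  then have "compact ({a..b} \<inter> S)" by (rule compact_Int_closed[OF compact_Icc])
  moreover have "{a..b} \<inter> S = S" by (auto simp: S_def)
  moreover have "xm \<in> S" using xm by (simp add: S_def M_def)
  ultimately obtain s where "s \<in> S" and s_least: "\<And>y. y \<in> S \<Longrightarrow> s \<le> y"
    using compact_attains_inf[of S] by auto
  then have s: "s \<in> {a..b}" "g s = M" by (auto simp: S_def)
  have "s \<noteq> a" "s \<noteq> b" using s ends \<open>M > 0\<close> by auto
  then have "s \<in> {a<..<b}" using s(1) by auto
  then obtain m \<delta> where "\<delta> > 0"
    and m: "\<forall>y\<in>{a..b}. \<bar>y - s\<bar> < \<delta> \<longrightarrow> g s + m * (y - s) \<le> g y"
    using support by blast
  define h where "h = min \<delta> (min (s - a) (b - s)) / 2"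
  have "h > 0" "h < \<delta>" "h < s - a" "h < b - s"
    using \<open>\<delta> > 0\<close> \<open>s \<in> {a<..<b}\<close> by (auto simp: h_def)
  then have h: "h > 0" "s - h \<in> {a..b}" "s + h \<in> {a..b}" "\<bar>(s - h) - s\<bar> < \<delta>" "\<bar>(s + h) - s\<bar> < \<delta>"
    by auto
  have "g s + m * ((s - h) - s) \<le> g (s - h)" "g s + m * ((s + h) - s) \<le> g (s + h)"
    using m h(2-5) by blast+
  then have "M - m * h \<le> g (s - h)" "M + m * h \<le> g (s + h)"
    using s(2) by (simp_all add: algebra_simps)
  moreover have "g (s - h) \<le> M" "g (s + h) \<le> M" using xm(2) h(2,3) by (simp_all add: M_def)
  ultimately have "g (s - h) = M" by linarith
  then have "s \<le> s - h" using s_least h(2) by (simp add: S_def)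
  then show False using h(1) by simp
qed

lemma convex_on_if_local_support_lines:
  fixes w :: "real \<Rightarrow> real"
  assumes A: "connected A" and cont: "continuous_on A w"
    and support: "\<And>s. s \<in> A \<Longrightarrow>
      \<exists>m \<delta>. \<delta> > 0 \<and> (\<forall>x\<in>A. \<bar>x - s\<bar> < \<delta> \<longrightarrow> w s + m * (x - s) \<le> w x)"
  shows "convex_on A w"
proof (rule convex_on_linorderI)
  show "convex A" using A by (simp add: is_interval_connected_1[symmetric] is_interval_convex_1)
  fix t a b :: real assume t: "0 < t" "t < 1" and a: "a \<in> A" and b: "b \<in> A" and "a < b"
  define sl where "sl = (w b - w a) / (b - a)"
  define g where "g = (\<lambda>z. w z - (w a + sl * (z - a)))"
  have Icc_A: "{a..b} \<subseteq> A" by (rule connected_contains_Icc[OF A a b])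
  have z: "(1 - t) *\<^sub>R a + t *\<^sub>R b = a + t * (b - a)" by (simp add: algebra_simps)
  have "g (a + t * (b - a)) \<le> 0"
  proof (rule nonpos_if_local_support_lines[of a b g])
    show "continuous_on {a..b} g"
      unfolding g_def by (intro continuous_intros continuous_on_subset[OF cont Icc_A])
    show "g a \<le> 0" "g b \<le> 0" using \<open>a < b\<close> by (simp_all add: g_def sl_def)
    have "t * (b - a) \<le> b - a" using t \<open>a < b\<close> by (intro mult_left_le_one_le) auto
    then show "a + t * (b - a) \<in> {a..b}" using t \<open>a < b\<close> by (auto simp: algebra_simps)
    fix s assume "s \<in> {a<..<b}"
    then have "s \<in> A" using Icc_A by auto
    then obtain m \<delta> where "\<delta> > 0" "\<forall>x\<in>A. \<bar>x - s\<bar> < \<delta> \<longrightarrow> w s + m * (x - s) \<le> w x"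
      using support by blast
    then show "\<exists>m \<delta>. \<delta> > 0 \<and> (\<forall>x\<in>{a..b}. \<bar>x - s\<bar> < \<delta> \<longrightarrow> g s + m * (x - s) \<le> g x)"
      using Icc_A by (intro exI[of _ "m - sl"] exI[of _ \<delta>]) (auto simp: g_def algebra_simps)
  qed
  moreover have "sl * (t * (b - a)) = t * (w b - w a)" using \<open>a < b\<close> by (simp add: sl_def)
  ultimately show "w ((1 - t) *\<^sub>R a + t *\<^sub>R b) \<le> (1 - t) * w a + t * w b"
    unfolding z g_def by (simp add: algebra_simps)
qed


lemma continuous_on_nonzero_sign:
  fixes g :: "real \<Rightarrow> real"
  assumes "connected A" "continuous_on A g" "\<And>x. x \<in> A \<Longrightarrow> g x \<noteq> 0"
  shows "\<exists>\<sigma>. (\<sigma> = 1 \<or> \<sigma> = -1) \<and> (\<forall>x\<in>A. \<bar>g x\<bar> = \<sigma> * g x)"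
proof -
  have "(\<forall>x\<in>A. g x > 0) \<or> (\<forall>x\<in>A. g x < 0)"
  proof (rule ccontr)
    assume "\<not> ?thesis"
    then obtain x y where xy: "x \<in> A" "y \<in> A" "g x \<le> 0" "g y \<ge> 0" by (meson not_le)
    have "connected (g ` A)" using connected_continuous_image assms(1,2) by blast
    then have "0 \<in> g ` A" using connected_contains_Icc[of "g ` A" "g x" "g y"] xy by auto
    then show False using assms(3) by auto
  qed
  then show ?thesis
  proof
    assume "\<forall>x\<in>A. g x > 0"
    then show ?thesis by (intro exI[of _ 1]) auto
  next
    assume "\<forall>x\<in>A. g x < 0"
    then show ?thesis by (intro exI[of _ "-1"]) auto
  qed
qed

lemma inverse_sqrt_abs_has_derivative:
  fixes g :: "real \<Rightarrow> real"
  assumes A: "open A" "connected A"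
    and g_diff: "\<And>x. x \<in> A \<Longrightarrow> g differentiable (at x)" and g_nz: "\<And>x. x \<in> A \<Longrightarrow> g x \<noteq> 0"
  shows "\<exists>\<sigma>. \<forall>x\<in>A. g x = \<sigma> / (inverse (sqrt \<bar>g x\<bar>))\<^sup>2"
    and "\<exists>h'. \<forall>x\<in>A. ((\<lambda>x. inverse (sqrt \<bar>g x\<bar>)) has_real_derivative h' x) (at x)"
proof -
  have cont: "continuous_on A g"
    using g_diff by (meson continuous_at_imp_continuous_on differentiable_imp_continuous_within)
  obtain \<sigma> where \<sigma>: "\<sigma> = 1 \<or> \<sigma> = -1" "\<And>x. x \<in> A \<Longrightarrow> \<bar>g x\<bar> = \<sigma> * g x"
    using continuous_on_nonzero_sign[OF A(2) cont g_nz] by auto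
  have "g x = \<sigma> / (inverse (sqrt \<bar>g x\<bar>))\<^sup>2" if "x \<in> A" for x
  proof -
    have "\<sigma> / (inverse (sqrt \<bar>g x\<bar>))\<^sup>2 = \<sigma> * \<bar>g x\<bar>" by (simp add: power_inverse divide_inverse)
    also have "\<dots> = g x" using \<sigma>(1) \<sigma>(2)[OF that] by auto
    finally show ?thesis ..
  qed
  then show "\<exists>\<sigma>. \<forall>x\<in>A. g x = \<sigma> / (inverse (sqrt \<bar>g x\<bar>))\<^sup>2" by blast
  have "\<forall>x\<in>A. \<exists>D. ((\<lambda>x. inverse (sqrt \<bar>g x\<bar>)) has_real_derivative D) (at x)"
  proof
    fix x assume x: "x \<in> A"
    obtain g' where "(g has_real_derivative g') (at x)" using g_diff[OF x] real_differentiable_def by blast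
    moreover have pos: "\<sigma> * g x > 0" using \<sigma>(2)[OF x] g_nz[OF x] by simp
    ultimately have d: "((\<lambda>x. sqrt (\<sigma> * g x)) has_real_derivative inverse (sqrt (\<sigma> * g x)) / 2 * (\<sigma> * g')) (at x)"
      by (intro DERIV_chain2[OF DERIV_real_sqrt] DERIV_cmult)
    have "sqrt (\<sigma> * g x) \<noteq> 0" using pos by auto
    then obtain D where D: "((\<lambda>x. inverse (sqrt (\<sigma> * g x))) has_real_derivative D) (at x)"
      using DERIV_inverse'[OF d] by blast
    have "((\<lambda>x. inverse (sqrt \<bar>g x\<bar>)) has_real_derivative D) (at x)"
      by (rule has_field_derivative_transform_within_open[OF D A(1) x]) (simp add: \<sigma>(2))
    then show "\<exists>D. ((\<lambda>x. inverse (sqrt \<bar>g x\<bar>)) has_real_derivative D) (at x)" ..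
  qed
  then show "\<exists>h'. \<forall>x\<in>A. ((\<lambda>x. inverse (sqrt \<bar>g x\<bar>)) has_real_derivative h' x) (at x)"
    by (rule bchoice)
qed

lemma local_support_line_comp_mult:
  fixes k u u' v v' :: "real \<Rightarrow> real"
  assumes A: "open A" and B: "open B" "connected B" and x0: "x0 \<in> A"
    and k_deriv: "\<And>x. x \<in> A \<Longrightarrow> (k has_real_derivative \<sigma> / (u x)\<^sup>2) (at x)"
    and k_A_B: "k ` A \<subseteq> B"
    and u_pos: "\<And>x. x \<in> A \<Longrightarrow> u x > 0"
    and u_deriv: "\<And>x. x \<in> A \<Longrightarrow> (u has_real_derivative u' x) (at x)"
    and u'_mono: "\<And>x y. x \<in> A \<Longrightarrow> y \<in> A \<Longrightarrow> x \<le> y \<Longrightarrow> u' x \<le> u' y"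
    and v_conv: "convex_on B v" and v_pos: "\<And>y. y \<in> B \<Longrightarrow> v y > 0"
    and v_deriv: "\<And>y. y \<in> B \<Longrightarrow> (v has_real_derivative v' y) (at y)"
  shows "\<exists>m \<delta>. \<delta> > 0 \<and> (\<forall>x\<in>A. \<bar>x - x0\<bar> < \<delta> \<longrightarrow> v (k x0) * u x0 + m * (x - x0) \<le> v (k x) * u x)"
proof -
  \<comment> \<open>v \<circ> k lies above p, the tangent line of v at k x0 pulled back by k, and p * u is
    convex near x0 because p' = \<gamma> / u^2.\<close>
  have kx0: "k x0 \<in> B" using k_A_B x0 by blast
  define p where "p = (\<lambda>x. v (k x0) + v' (k x0) * (k x - k x0))"
  have p_deriv: "(p has_real_derivative v' (k x0) * \<sigma> / (u x)\<^sup>2) (at x)" if "x \<in> A" for x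
    using k_deriv[OF that] unfolding p_def by (auto intro!: derivative_eq_intros)
  then have "continuous_on A p" by (rule DERIV_continuous_on[OF has_field_derivative_at_within])
  then have "open (A \<inter> p -` {0<..})" by (rule continuous_open_preimage[OF _ A open_greaterThan])
  moreover have "x0 \<in> A \<inter> p -` {0<..}" using v_pos[OF kx0] x0 by (simp add: p_def)
  ultimately obtain \<delta> where "\<delta> > 0" and ball: "ball x0 \<delta> \<subseteq> A \<inter> p -` {0<..}"
    using open_contains_ball by blast
  have in_A: "x \<in> A" and p_pos: "p x > 0" if "x \<in> ball x0 \<delta>" for x
    using ball that by auto
  have pu_conv: "convex_on (ball x0 \<delta>) (\<lambda>x. p x * u x)"
    by (rule convex_on_mult_if_deriv_inverse_square[where \<gamma> = "v' (k x0) * \<sigma>" and u' = u'])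
      (use in_A p_pos u_pos u_deriv u'_mono p_deriv in \<open>auto simp del: mem_ball\<close>)
  obtain q' where q': "((\<lambda>x. p x * u x) has_real_derivative q') (at x0)"
    using p_deriv[OF x0] u_deriv[OF x0] DERIV_mult by blast
  have "x0 \<in> interior (ball x0 \<delta>)" using \<open>\<delta> > 0\<close> by simp
  note pu_above_tangent = convex_on_imp_above_tangent[OF pu_conv connected_ball this _
      has_field_derivative_at_within[OF q']]
  have p_below: "p x * u x \<le> v (k x) * u x" if "x \<in> A" for x
  proof -
    have "k x0 \<in> interior B" using kx0 B(1) by (simp add: interior_open)
    moreover have "k x \<in> B" using k_A_B that by blast
    ultimately have "v' (k x0) * (k x - k x0) \<le> v (k x) - v (k x0)"
      by (rule convex_on_imp_above_tangent[OF v_conv B(2) _ _ has_field_derivative_at_within[OF v_deriv[OF kx0]]])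
    then show ?thesis using u_pos[OF that] by (simp add: p_def)
  qed
  show ?thesis
  proof (rule exI[of _ q'], rule exI[of _ \<delta>], intro conjI ballI impI)
    show "\<delta> > 0" by fact
    fix x assume x: "x \<in> A" "\<bar>x - x0\<bar> < \<delta>"
    then have "v (k x0) * u x0 + q' * (x - x0) \<le> p x * u x"
      using pu_above_tangent[of x] by (simp add: p_def dist_real_def abs_minus_commute)
    also have "\<dots> \<le> v (k x) * u x" by (rule p_below[OF x(1)])
    finally show "v (k x0) * u x0 + q' * (x - x0) \<le> v (k x) * u x" .
  qed
qed

text \<open>The chain rule for the convexity of |g'|^(-1/2), the integrated form of negative
  Schwarzian derivative: |(d \<circ> k)'|^(-1/2) = |d \<circ> k|^(-1/2) * |k'|^(-1/2).\<close>

lemma convex_on_inverse_sqrt_abs_comp: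
  fixes k k' d :: "real \<Rightarrow> real"
  assumes A: "open A" "connected A" and B: "open B" "connected B"
    and k_deriv: "\<And>x. x \<in> A \<Longrightarrow> (k has_real_derivative k' x) (at x)"
    and k'_diff: "\<And>x. x \<in> A \<Longrightarrow> k' differentiable (at x)"
    and k'_nz: "\<And>x. x \<in> A \<Longrightarrow> k' x \<noteq> 0"
    and k'_conv: "convex_on A (\<lambda>x. inverse (sqrt \<bar>k' x\<bar>))"
    and k_A_B: "k ` A \<subseteq> B"
    and d_diff: "\<And>y. y \<in> B \<Longrightarrow> d differentiable (at y)"
    and d_nz: "\<And>y. y \<in> B \<Longrightarrow> d y \<noteq> 0"
    and d_conv: "convex_on B (\<lambda>y. inverse (sqrt \<bar>d y\<bar>))"
  shows "convex_on A (\<lambda>x. inverse (sqrt \<bar>d (k x) * k' x\<bar>))"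
proof -
  define u where "u = (\<lambda>x. inverse (sqrt \<bar>k' x\<bar>))"
  define v where "v = (\<lambda>y. inverse (sqrt \<bar>d y\<bar>))"
  from inverse_sqrt_abs_has_derivative[OF A k'_diff k'_nz] obtain \<sigma> u'
    where k'_u: "\<forall>x\<in>A. k' x = \<sigma> / (u x)\<^sup>2" and u': "\<forall>x\<in>A. (u has_real_derivative u' x) (at x)"
    unfolding u_def by blast
  from inverse_sqrt_abs_has_derivative(2)[OF B d_diff d_nz] obtain v'
    where v': "\<forall>y\<in>B. (v has_real_derivative v' y) (at y)"
    unfolding v_def by blast
  have u_pos: "u x > 0" if "x \<in> A" for x using k'_nz[OF that] by (simp add: u_def)
  have v_pos: "v y > 0" if "y \<in> B" for y using d_nz[OF that] by (simp add: v_def)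
  have u'_mono: "u' x \<le> u' y" if "x \<in> A" "y \<in> A" "x \<le> y" for x y
    using convex_on_derivative_mono[OF k'_conv[folded u_def] A that] u' that by blast
  have k_deriv': "(k has_real_derivative \<sigma> / (u x)\<^sup>2) (at x)" if "x \<in> A" for x
    using k_deriv[OF that] k'_u that by simp
  have "convex_on A (\<lambda>x. v (k x) * u x)"
  proof (rule convex_on_if_local_support_lines[OF A(2)])
    have k_cont: "continuous_on A k" by (rule DERIV_continuous_on[OF has_field_derivative_at_within[OF k_deriv]])
    have u_cont: "continuous_on A u" by (rule DERIV_continuous_on[OF has_field_derivative_at_within[OF u'[rule_format]]])
    have v_cont: "continuous_on B v" by (rule DERIV_continuous_on[OF has_field_derivative_at_within[OF v'[rule_format]]])
    show "continuous_on A (\<lambda>x. v (k x) * u x)"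
      by (rule continuous_on_mult[OF continuous_on_compose2[OF v_cont k_cont k_A_B] u_cont])
    fix x0 assume "x0 \<in> A"
    then show "\<exists>m \<delta>. \<delta> > 0 \<and> (\<forall>x\<in>A. \<bar>x - x0\<bar> < \<delta> \<longrightarrow> v (k x0) * u x0 + m * (x - x0) \<le> v (k x) * u x)"
      by (rule local_support_line_comp_mult[OF A(1) B _ k_deriv' k_A_B u_pos _ u'_mono
            d_conv[folded v_def] v_pos]) (use u' v' in auto)
  qed
  moreover have "(\<lambda>x. inverse (sqrt \<bar>d (k x) * k' x\<bar>)) = (\<lambda>x. v (k x) * u x)"
    by (simp add: u_def v_def abs_mult real_sqrt_mult)
  ultimately show ?thesis by simp
qed

lemma convex_on_Ioo_one_side_ge:
  fixes h :: "real \<Rightarrow> real"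
  assumes conv: "convex_on {c<..<d} h" and x: "x \<in> {c<..<d}"
  shows "(\<forall>y\<in>{x<..<d}. h x \<le> h y) \<or> (\<forall>y\<in>{c<..<x}. h x \<le> h y)"
proof (rule ccontr)
  assume "\<not> ?thesis"
  then obtain y z where y: "y \<in> {x<..<d}" "h y < h x" and z: "z \<in> {c<..<x}" "h z < h x"
    by (auto simp: not_le)
  define t where "t = (x - z) / (y - z)"
  have t: "0 < t" "t < 1" using y z by (auto simp: t_def field_simps)
  have "t * (y - z) = x - z" using y z by (simp add: t_def)
  then have "(1 - t) *\<^sub>R z + t *\<^sub>R y = x" by (simp add: algebra_simps)
  then have "h x \<le> (1 - t) * h z + t * h y"
    using convex_onD[OF conv, of t z y] t y z x by simp
  also have "\<dots> < (1 - t) * h x + t * h x"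
    using t y z by (intro add_strict_mono mult_strict_left_mono) auto
  finally show False by (simp add: algebra_simps)
qed

section \<open>Intervals, mean values and return times\<close>

lemma connected_subset_one_side:
  fixes S :: "real set"
  assumes "connected S" "S \<subseteq> {-1<..<1}" "0 \<notin> S"
  shows "S \<subseteq> {-1<..<0} \<or> S \<subseteq> {0<..<1}"
proof (rule ccontr)
  assume "\<not> ?thesis"
  then obtain x y where "x \<in> S" "y \<in> S" "0 \<le> x" "y \<le> 0" using assms(2) by (auto simp: subset_iff)
  then show False using connected_contains_Icc[OF assms(1), of y x] assms(3) by auto
qed

lemma open_connected_bounded_eq_Ioo:
  fixes S :: "real set"
  assumes "open S" "connected S" "S \<noteq> {}" "bdd_below S" "bdd_above S"
  shows "S = {Inf S<..<Sup S}"
proof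
  show "{Inf S<..<Sup S} \<subseteq> S"
  proof
    fix y assume y: "y \<in> {Inf S<..<Sup S}"
    obtain a where "a \<in> S" "a < y" using y cInf_less_iff[OF assms(3,4)] by auto
    moreover obtain b where "b \<in> S" "y < b" using y less_cSup_iff[OF assms(3,5)] by auto
    ultimately show "y \<in> S" using connected_contains_Icc[OF assms(2)] by fastforce
  qed
  show "S \<subseteq> {Inf S<..<Sup S}"
  proof
    fix y assume "y \<in> S"
    then obtain e where "e > 0" "ball y e \<subseteq> S" using assms(1) open_contains_ball by blast
    then have "y - e/2 \<in> S" "y + e/2 \<in> S" by (auto simp: dist_real_def subset_iff)
    then have "Inf S \<le> y - e/2" "y + e/2 \<le> Sup S"
      using cInf_lower[OF _ assms(4)] cSup_upper[OF _ assms(5)] by auto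
    then show "y \<in> {Inf S<..<Sup S}" using \<open>e > 0\<close> by auto
  qed
qed

lemma connected_component_eq_Ioo:
  fixes S :: "real set"
  assumes "open S" "bdd_below S" "bdd_above S" "x \<in> S"
  obtains c d where "connected_component_set S x = {c<..<d}" "c < d"
proof -
  let ?C = "connected_component_set S x"
  have "x \<in> ?C" using assms(4) by simp
  moreover have "?C \<subseteq> S" by (rule connected_component_subset)
  ultimately have "?C = {Inf ?C<..<Sup ?C}"
    using assms by (intro open_connected_bounded_eq_Ioo open_connected_component)
      (auto intro: bdd_below_mono bdd_above_mono simp del: mem_Collect_eq)
  moreover have "Inf ?C < Sup ?C" using \<open>x \<in> ?C\<close> calculation by (metis empty_iff greaterThanLessThan_empty_iff not_less)
  ultimately show thesis by (rule that)
qed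

lemma connected_meets_boundary_Ioo:
  fixes S :: "real set"
  assumes "connected S" "x \<in> S" "y \<in> S" "x \<notin> {a<..<b}" "y \<in> {a<..<b}"
  shows "a \<in> S \<or> b \<in> S"
proof (cases "x \<le> a")
  case True
  then show ?thesis using connected_contains_Icc[OF assms(1,2,3)] assms(5) by auto
next
  case False
  with assms(4,5) have "b \<in> {y..x}" by auto
  then show ?thesis using connected_contains_Icc[OF assms(1,3,2)] by blast
qed

lemma inj_on_if_deriv_nonzero:
  fixes g g' :: "real \<Rightarrow> real"
  assumes "\<And>y. y \<in> {a..b} \<Longrightarrow> (g has_real_derivative g' y) (at y)"
    and "\<And>y. y \<in> {a<..<b} \<Longrightarrow> g' y \<noteq> 0"
  shows "inj_on g {a..b}"
proof -
  have "g u \<noteq> g v" if uv: "u \<in> {a..b}" "v \<in> {a..b}" "u < v" for u v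
  proof -
    obtain z where "u < z" "z < v" "g v - g u = (v - u) * g' z"
      using MVT2[OF uv(3), of g g'] assms(1) uv by fastforce
    moreover have "g' z \<noteq> 0" using assms(2) uv \<open>u < z\<close> \<open>z < v\<close> by auto
    ultimately have "g v - g u \<noteq> 0" using uv(3) by simp
    then show ?thesis by simp
  qed
  then show ?thesis by (metis inj_onI linorder_neqE_linordered_idom)
qed

lemma MVT_abs_le:
  fixes g g' :: "real \<Rightarrow> real"
  assumes "a < b" "\<And>y. y \<in> {a..b} \<Longrightarrow> (g has_real_derivative g' y) (at y)"
    and "\<And>y. y \<in> {a<..<b} \<Longrightarrow> \<bar>g' y\<bar> \<le> M"
  shows "\<bar>g b - g a\<bar> \<le> M * (b - a)"
proof -
  obtain \<xi> where \<xi>: "a < \<xi>" "\<xi> < b" "g b - g a = (b - a) * g' \<xi>"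
    using MVT2[OF assms(1), of g g'] assms(2) by fastforce
  then have "\<bar>g b - g a\<bar> = (b - a) * \<bar>g' \<xi>\<bar>" by (simp add: abs_mult)
  also have "\<dots> \<le> (b - a) * M" using assms(1,3) \<xi> by (intro mult_left_mono) auto
  finally show ?thesis by (simp add: mult.commute)
qed

lemma returns_ret_time:
  assumes "returns F U x"
  shows "ret_time F U x \<ge> 1" "(F ^^ ret_time F U x) x \<in> U"
    and "\<And>j. 1 \<le> j \<Longrightarrow> j < ret_time F U x \<Longrightarrow> (F ^^ j) x \<notin> U"
proof -
  have ex: "\<exists>k. k \<ge> 1 \<and> (F ^^ k) x \<in> U" using assms by (auto simp: returns_def)
  show "ret_time F U x \<ge> 1" "(F ^^ ret_time F U x) x \<in> U"
    using LeastI_ex[OF ex] by (auto simp: ret_time_def)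
  show "(F ^^ j) x \<notin> U" if "1 \<le> j" "j < ret_time F U x" for j
    using that not_less_Least unfolding ret_time_def by blast
qed

lemma ret_time_eqI:
  assumes "n \<ge> 1" "(F ^^ n) x \<in> U" "\<And>j. 1 \<le> j \<Longrightarrow> j < n \<Longrightarrow> (F ^^ j) x \<notin> U"
  shows "returns F U x" "ret_time F U x = n"
proof -
  show "returns F U x" using assms by (auto simp: returns_def)
  show "ret_time F U x = n" unfolding ret_time_def
    by (rule Least_equality) (use assms in \<open>auto simp: not_less[symmetric]\<close>)
qed

section \<open>Iterates of an S-unimodal map\<close>

definition orbit_deriv :: "(real \<Rightarrow> real) \<Rightarrow> (real \<Rightarrow> real) \<Rightarrow> nat \<Rightarrow> real \<Rightarrow> real" where
  "orbit_deriv F D n x = (\<Prod>i<n. D ((F ^^ i) x))"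

lemma orbit_deriv_Suc: "orbit_deriv F D (Suc n) x = D ((F ^^ n) x) * orbit_deriv F D n x"
  by (simp add: orbit_deriv_def)

locale s_unimodal_map =
  fixes F D :: "real \<Rightarrow> real"
  assumes maps_II: "\<And>x. x \<in> II \<Longrightarrow> F x \<in> II"
    and continuous: "continuous_on II F"
    and has_deriv: "\<And>y. y \<in> {-1<..<1} \<Longrightarrow> (F has_real_derivative D y) (at y)"
    and deriv_differentiable: "\<And>y. y \<in> {-1<..<1} \<Longrightarrow> D differentiable (at y)"
    and deriv_nonzero: "\<And>y. y \<in> II \<Longrightarrow> y \<noteq> 0 \<Longrightarrow> D y \<noteq> 0"
    and convex_left: "convex_on {-1<..<0} (\<lambda>x. inverse (sqrt \<bar>D x\<bar>))"
    and convex_right: "convex_on {0<..<1} (\<lambda>x. inverse (sqrt \<bar>D x\<bar>))"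
    and boundary: "F (-1) \<in> {-1, 1}" "F 1 \<in> {-1, 1}"
begin

lemma funpow_in_II: "x \<in> II \<Longrightarrow> (F ^^ j) x \<in> II"
  by (induction j) (auto simp del: atLeastAtMost_iff intro: maps_II)

lemma continuous_on_funpow: "continuous_on II (F ^^ j)"
proof (induction j)
  case (Suc j)
  have "continuous_on ((F ^^ j) ` II) F"
    by (rule continuous_on_subset[OF continuous]) (use funpow_in_II in blast)
  from continuous_on_compose[OF Suc this] show ?case by simp
qed (simp add: continuous_on_id)

lemma funpow_boundary: "x \<in> {-1, 1} \<Longrightarrow> (F ^^ j) x \<in> {-1, 1}"
  by (induction j) (use boundary in auto)

lemma funpow_interior_before:
  assumes "x \<in> II" "(F ^^ m) x \<in> {-1<..<1}" "j \<le> m"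
  shows "(F ^^ j) x \<in> {-1<..<1}"
proof (rule ccontr)
  assume "(F ^^ j) x \<notin> {-1<..<1}"
  with funpow_in_II[OF assms(1), of j] have "(F ^^ j) x \<in> {-1, 1}" by auto
  then have "(F ^^ (m - j)) ((F ^^ j) x) \<in> {-1, 1}" by (rule funpow_boundary)
  moreover have "(F ^^ m) x = (F ^^ (m - j)) ((F ^^ j) x)"
    using assms(3) funpow_add[of "m - j" j F] by simp
  ultimately show False using assms(2) by auto
qed

lemma has_real_derivative_funpow:
  assumes "\<And>i. i < j \<Longrightarrow> (F ^^ i) x \<in> {-1<..<1}"
  shows "((F ^^ j) has_real_derivative orbit_deriv F D j x) (at x)"
  using assms
proof (induction j)
  case 0
  then show ?case by (simp add: orbit_deriv_def)
next
  case (Suc j)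
  then have "((F ^^ j) has_real_derivative orbit_deriv F D j x) (at x)"
    and "(F has_real_derivative D ((F ^^ j) x)) (at ((F ^^ j) x))" using has_deriv by auto
  from DERIV_chain[OF this(2,1)] show ?case by (simp add: o_def orbit_deriv_Suc)
qed

lemma orbit_deriv_differentiable:
  assumes "\<And>i. i < j \<Longrightarrow> (F ^^ i) x \<in> {-1<..<1}"
  shows "orbit_deriv F D j differentiable (at x)"
  using assms
proof (induction j)
  case 0
  then show ?case by (simp add: orbit_deriv_def)
next
  case (Suc j)
  have "(F ^^ j) differentiable (at x)"
    using has_real_derivative_funpow[of j x] Suc.prems real_differentiable_def by auto
  moreover have "D differentiable (at ((F ^^ j) x))" using Suc.prems deriv_differentiable by auto
  ultimately have "(\<lambda>x. D ((F ^^ j) x)) differentiable (at x)"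
    using differentiable_compose by blast
  moreover have "orbit_deriv F D j differentiable (at x)" using Suc by auto
  ultimately show ?case unfolding orbit_deriv_Suc[abs_def] by (rule differentiable_mult)
qed

lemma orbit_deriv_nonzero:
  assumes "\<And>i. i < j \<Longrightarrow> (F ^^ i) x \<in> II - {0}"
  shows "orbit_deriv F D j x \<noteq> 0"
  using assms deriv_nonzero by (auto simp: orbit_deriv_def)

lemma funpow_image_in_lap:
  assumes "connected A" "A \<subseteq> II" "\<And>x. x \<in> A \<Longrightarrow> (F ^^ j) x \<in> {-1<..<1} - {0}"
  obtains B where "B = {-1<..<0} \<or> B = {0<..<1}" "(F ^^ j) ` A \<subseteq> B"
proof -
  have "connected ((F ^^ j) ` A)"
    using assms(2) by (intro connected_continuous_image assms(1) continuous_on_subset[OF continuous_on_funpow])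
  moreover have "(F ^^ j) ` A \<subseteq> {-1<..<1}" "0 \<notin> (F ^^ j) ` A" using assms(3) by auto
  ultimately have "(F ^^ j) ` A \<subseteq> {-1<..<0} \<or> (F ^^ j) ` A \<subseteq> {0<..<1}"
    by (rule connected_subset_one_side)
  then show thesis
  proof
    assume "(F ^^ j) ` A \<subseteq> {-1<..<0}"
    then show thesis by (intro that[of "{-1<..<0}"]) simp_all
  next
    assume "(F ^^ j) ` A \<subseteq> {0<..<1}"
    then show thesis by (intro that[of "{0<..<1}"]) simp_all
  qed
qed

lemma convex_on_inverse_sqrt_orbit_deriv:
  assumes A: "open A" "connected A"
    and orbit: "\<And>x i. x \<in> A \<Longrightarrow> i < j \<Longrightarrow> (F ^^ i) x \<in> {-1<..<1} - {0}"
  shows "convex_on A (\<lambda>x. inverse (sqrt \<bar>orbit_deriv F D j x\<bar>))"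
  using orbit
proof (induction j)
  case 0
  have "convex A" using A(2) by (simp add: is_interval_connected_1[symmetric] is_interval_convex_1)
  then show ?case by (simp add: orbit_deriv_def convex_on_const)
next
  case (Suc j)
  have orbit_j: "(F ^^ i) x \<in> {-1<..<1} - {0}" if "x \<in> A" "i \<le> j" for x i
    using that by (intro Suc.prems) auto
  have "A \<subseteq> II"
  proof
    fix x assume "x \<in> A"
    from orbit_j[OF this, of 0] show "x \<in> II" by simp
  qed
  then obtain B where B: "B = {-1<..<0} \<or> B = {0<..<1}" "(F ^^ j) ` A \<subseteq> B"
  proof (rule funpow_image_in_lap[OF A(2)])
    show "(F ^^ j) x \<in> {-1<..<1} - {0}" if "x \<in> A" for x using orbit_j[OF that] by simp
  qed
  have "convex_on A (\<lambda>x. inverse (sqrt \<bar>D ((F ^^ j) x) * orbit_deriv F D j x\<bar>))"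
  proof (rule convex_on_inverse_sqrt_abs_comp[OF A, where k = "F ^^ j" and k' = "orbit_deriv F D j" and d = D and B = B])
    show "open B" "connected B" using B(1) by auto
    show "convex_on B (\<lambda>y. inverse (sqrt \<bar>D y\<bar>))" using B(1) convex_left convex_right by auto
    show "(F ^^ j) ` A \<subseteq> B" by (fact B(2))
    show "D differentiable (at y)" "D y \<noteq> 0" if "y \<in> B" for y
      using that B(1) deriv_differentiable deriv_nonzero by auto
    show "convex_on A (\<lambda>x. inverse (sqrt \<bar>orbit_deriv F D j x\<bar>))"
      using Suc.IH orbit_j by simp
    fix x assume x: "x \<in> A"
    have in_I: "(F ^^ i) x \<in> {-1<..<1}" and nonzero: "(F ^^ i) x \<in> II - {0}" if "i < j" for i
      using orbit_j[OF x, of i] that by auto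
    show "((F ^^ j) has_real_derivative orbit_deriv F D j x) (at x)"
      by (rule has_real_derivative_funpow[OF in_I])
    show "orbit_deriv F D j differentiable (at x)" by (rule orbit_deriv_differentiable[OF in_I])
    show "orbit_deriv F D j x \<noteq> 0" by (rule orbit_deriv_nonzero[OF nonzero])
  qed
  then show ?case by (simp add: orbit_deriv_Suc)
qed

end

lemma S_unimodal_imp_s_unimodal_map:
  assumes "S_unimodal F"
  obtains D where "s_unimodal_map F D"
proof -
  from assms obtain f' f'' where
    maps: "F ` II \<subseteq> II" and
    d1: "\<forall>x\<in>II. (F has_real_derivative f' x) (at x within II)" and
    d2: "\<forall>x\<in>II. (f' has_real_derivative f'' x) (at x within II)" and
    nz: "\<forall>x\<in>II. f' x = 0 \<longleftrightarrow> x = 0" and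
    cl: "convex_on {-1..<0} (\<lambda>x. inverse (sqrt \<bar>f' x\<bar>))" and
    cr: "convex_on {0<..1} (\<lambda>x. inverse (sqrt \<bar>f' x\<bar>))" and
    bd: "F (-1) \<in> {-1, 1}" "F 1 \<in> {-1, 1}"
    unfolding S_unimodal_def by blast
  have at_interior: "at y within II = at y" if "y \<in> {-1<..<1}" for y :: real
    using that by (intro at_within_interior) simp
  have "s_unimodal_map F f'"
  proof
    show "F x \<in> II" if "x \<in> II" for x using maps that by blast
    show "continuous_on II F" using d1 by (meson DERIV_continuous continuous_on_eq_continuous_within)
    fix y :: real assume y: "y \<in> {-1<..<1}"
    then have "y \<in> II" by auto
    then have "(F has_real_derivative f' y) (at y within II)" "(f' has_real_derivative f'' y) (at y within II)"
      using d1 d2 by blast+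
    then have "(F has_real_derivative f' y) (at y)" and f'_deriv: "(f' has_real_derivative f'' y) (at y)"
      using at_interior[OF y] by simp_all
    then show "(F has_real_derivative f' y) (at y)" by simp
    from f'_deriv show "f' differentiable (at y)" using real_differentiable_def by blast
  next
    show "f' y \<noteq> 0" if "y \<in> II" "y \<noteq> 0" for y using nz that by blast
    show "convex_on {-1<..<0} (\<lambda>x. inverse (sqrt \<bar>f' x\<bar>))" by (rule convex_on_subset[OF cl]) auto
    show "convex_on {0<..<1} (\<lambda>x. inverse (sqrt \<bar>f' x\<bar>))" by (rule convex_on_subset[OF cr]) auto
    show "F (-1) \<in> {-1, 1}" "F 1 \<in> {-1, 1}" by (fact bd)+
  qed
  then show thesis by (rule that)
qed

section \<open>The extension of a non-central branch\<close>

locale noncentral_branch = s_unimodal_map +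
  fixes a0 b0 a1 b1 :: real and W :: "real set" and n :: nat
  assumes nested: "-1 < a0" "a0 \<le> a1" "a1 < 0" "0 < b1" "b1 \<le> b0" "b0 < 1"
    and boundary_never_enters: "\<And>k p. 1 \<le> k \<Longrightarrow> p \<in> {a0, b0, a1, b1} \<Longrightarrow> (F ^^ k) p \<notin> {a0<..<b0}"
    and critical_first_entry: "(\<forall>k\<ge>1. (F ^^ k) 0 \<notin> {a0<..<b0}) \<or>
      (\<exists>k\<ge>1. (F ^^ k) 0 \<in> {a1<..<b1} \<and> (\<forall>j. 1 \<le> j \<and> j < k \<longrightarrow> (F ^^ j) 0 \<notin> {a0<..<b0}))"
    and branch: "is_branch F {a1<..<b1} W"
    and zero_notin_W: "0 \<notin> W"
    and ret_time_W: "\<And>x. x \<in> W \<Longrightarrow> ret_time F {a1<..<b1} x = n"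
begin

abbreviation U0 :: "real set" where "U0 \<equiv> {a0<..<b0}"
abbreviation U1 :: "real set" where "U1 \<equiv> {a1<..<b1}"

lemma W_const_ret_interval: "const_ret_interval F U1 W"
  and W_maximal: "const_ret_interval F U1 V \<Longrightarrow> W \<subseteq> V \<Longrightarrow> V = W"
  using branch by (auto simp: is_branch_def)

lemma W_interval: obtains p q where "p < q" "W = {p<..<q}"
  using W_const_ret_interval by (auto simp: const_ret_interval_def open_interval_def)

lemma open_W: "open W" and connected_W: "connected W"
proof -
  obtain p q where "W = {p<..<q}" by (rule W_interval)
  then show "open W" "connected W" by simp_all
qed

lemma W_first_return:
  assumes "x \<in> W"
  shows "1 \<le> n" "(F ^^ n) x \<in> U1" "\<And>j. 1 \<le> j \<Longrightarrow> j < n \<Longrightarrow> (F ^^ j) x \<notin> U1"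
proof -
  have "returns F U1 x" using W_const_ret_interval assms by (simp add: const_ret_interval_def)
  note ret = returns_ret_time[OF this, unfolded ret_time_W[OF assms]]
  show "1 \<le> n" "(F ^^ n) x \<in> U1" by (fact ret(1), fact ret(2))
  show "(F ^^ j) x \<notin> U1" if "1 \<le> j" "j < n" for j by (rule ret(3)[OF that])
qed

lemma some_in_W: "(SOME x. x \<in> W) \<in> W"
proof -
  obtain p q where "p < q" "W = {p<..<q}" by (rule W_interval)
  then have "(p + q) / 2 \<in> W" by simp
  then show ?thesis by (rule someI)
qed

lemma n_ge_1: "1 \<le> n"
  using W_first_return(1)[OF some_in_W] .

text \<open>The interval What of the theorem; the base point is any point of W, since W is connected
  and contained in the set whose component is taken.\<close>

definition extension :: "real set" where
  "extension = connected_component_set (U1 \<inter> (F ^^ n) -` U0) (SOME x. x \<in> W)"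

lemma open_pullback: "open (U1 \<inter> (F ^^ n) -` U0)"
proof -
  have "continuous_on U1 (F ^^ n)"
    by (rule continuous_on_subset[OF continuous_on_funpow]) (use nested in auto)
  then show ?thesis by (rule continuous_open_preimage[OF _ open_greaterThanLessThan open_greaterThanLessThan])
qed

lemma extension_subset: "extension \<subseteq> U1 \<inter> (F ^^ n) -` U0"
  unfolding extension_def by (rule connected_component_subset)

lemma open_extension: "open extension"
  unfolding extension_def by (rule open_connected_component[OF open_pullback])

lemma connected_extension: "connected extension"
  unfolding extension_def by (rule connected_connected_component)

lemma W_subset_extension: "W \<subseteq> extension"
  unfolding extension_def
proof (rule connected_component_maximal[OF some_in_W])
  show "connected W" by (fact connected_W)
  show "W \<subseteq> U1 \<inter> (F ^^ n) -` U0"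
  proof
    fix x assume "x \<in> W"
    then have "x \<in> U1" "(F ^^ n) x \<in> U1"
      using W_first_return(2) W_const_ret_interval by (auto simp: const_ret_interval_def)
    then show "x \<in> U1 \<inter> (F ^^ n) -` U0" using nested by auto
  qed
qed

lemma extension_eq_Ioo:
  obtains c d where "extension = {c<..<d}" "c < d" "a1 \<le> c" "d \<le> b1"
proof -
  obtain c d where cd: "extension = {c<..<d}" "c < d"
    unfolding extension_def
  proof (rule connected_component_eq_Ioo[OF open_pullback])
    show "bdd_below (U1 \<inter> (F ^^ n) -` U0)" "bdd_above (U1 \<inter> (F ^^ n) -` U0)"
      by (auto intro: bdd_below_mono bdd_above_mono)
    show "(SOME x. x \<in> W) \<in> U1 \<inter> (F ^^ n) -` U0"
      using some_in_W W_subset_extension extension_subset by blast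
  qed
  moreover have "{c<..<d} \<subseteq> U1" using extension_subset cd by blast
  ultimately show thesis by (intro that) (auto simp: greaterThanLessThan_subseteq_greaterThanLessThan)
qed

lemma closure_extension_subset: "closure extension \<subseteq> {a1..b1}"
proof -
  obtain c d where "extension = {c<..<d}" "c < d" "a1 \<le> c" "d \<le> b1" by (rule extension_eq_Ioo)
  then show ?thesis by simp
qed

lemma image_closure_extension: "(F ^^ n) ` closure extension \<subseteq> {a0..b0}"
proof (rule image_closure_subset)
  show "continuous_on (closure extension) (F ^^ n)"
    using closure_extension_subset nested by (intro continuous_on_subset[OF continuous_on_funpow]) auto
  show "(F ^^ n) ` extension \<subseteq> {a0..b0}" using extension_subset by auto
qed simp

lemma image_frontier_extension:
  assumes "e \<in> frontier extension"
  shows "(F ^^ n) e \<in> {a0, b0}"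
proof -
  have "e \<in> frontier (U1 \<inter> (F ^^ n) -` U0)"
    using assms frontier_of_connected_component_subset unfolding extension_def by blast
  then have "e \<notin> U1 \<inter> (F ^^ n) -` U0" using open_pullback frontier_disjoint_eq by blast
  moreover have "e \<in> {a1..b1}" using assms closure_extension_subset by (auto simp: frontier_def)
  ultimately have "(F ^^ n) e \<notin> U0"
    using boundary_never_enters[OF n_ge_1, of e] by (cases "e = a1 \<or> e = b1") auto
  moreover have "(F ^^ n) e \<in> {a0..b0}"
    using assms image_closure_extension by (auto simp: frontier_def)
  ultimately show ?thesis by auto
qed

lemma orbit_closure_extension_interior:
  assumes "y \<in> closure extension" "i \<le> n"
  shows "(F ^^ i) y \<in> {-1<..<1}"
proof (rule funpow_interior_before[OF _ _ assms(2)])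
  show "y \<in> II" using assms(1) closure_extension_subset nested by auto
  show "(F ^^ n) y \<in> {-1<..<1}" using assms(1) image_closure_extension nested by fastforce
qed

lemma has_real_derivative_extension:
  "y \<in> closure extension \<Longrightarrow> ((F ^^ n) has_real_derivative orbit_deriv F D n y) (at y)"
  using orbit_closure_extension_interior by (intro has_real_derivative_funpow) simp

lemma continuous_on_closure_extension: "continuous_on (closure extension) (F ^^ n)"
proof (rule DERIV_continuous_on)
  fix y assume "y \<in> closure extension"
  then show "((F ^^ n) has_field_derivative orbit_deriv F D n y) (at y within closure extension)"
    by (rule has_field_derivative_at_within[OF has_real_derivative_extension])
qed

lemma no_early_return:
  assumes y: "y \<in> extension" and j: "1 \<le> j" "j < n"
  shows "(F ^^ j) y \<notin> U1"
proof
  assume "(F ^^ j) y \<in> U1"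
  \<comment> \<open>otherwise the connected set F^j(extension) meets \<partial>U1, whose points never enter U0\<close>
  have "extension \<subseteq> II" using extension_subset nested by auto
  then have "connected ((F ^^ j) ` extension)"
    by (intro connected_continuous_image connected_extension continuous_on_subset[OF continuous_on_funpow])
  moreover have "(F ^^ j) (SOME x. x \<in> W) \<notin> U1" using W_first_return(3)[OF some_in_W j] .
  ultimately have "a1 \<in> (F ^^ j) ` extension \<or> b1 \<in> (F ^^ j) ` extension"
    using \<open>(F ^^ j) y \<in> U1\<close> y some_in_W W_subset_extension
    by (intro connected_meets_boundary_Ioo[of _ "(F ^^ j) (SOME x. x \<in> W)" "(F ^^ j) y"]) auto
  then obtain z where z: "z \<in> extension" "(F ^^ j) z \<in> {a1, b1}" by auto
  have "(F ^^ n) z = (F ^^ (n - j)) ((F ^^ j) z)" using j funpow_add[of "n - j" j F] by simp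
  moreover have "(F ^^ (n - j)) ((F ^^ j) z) \<notin> U0" using boundary_never_enters z(2) j by simp
  moreover have "(F ^^ n) z \<in> U0" using z(1) extension_subset by auto
  ultimately show False by simp
qed

lemma const_ret_interval_extension:
  assumes "open_interval V" "V \<subseteq> extension" "\<And>y. y \<in> V \<Longrightarrow> (F ^^ n) y \<in> U1"
  shows "const_ret_interval F U1 V"
proof -
  have "returns F U1 y \<and> ret_time F U1 y = n" if "y \<in> V" for y
    using ret_time_eqI[OF n_ge_1 assms(3)[OF that]] no_early_return assms(2) that by blast
  moreover have "V \<subseteq> U1" using assms(2) extension_subset by auto
  ultimately show ?thesis using assms(1) unfolding const_ret_interval_def by blast
qed

lemma orbit_extension_nonzero:
  assumes "y \<in> extension" "y \<noteq> 0" "i < n"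
  shows "(F ^^ i) y \<in> {-1<..<1} - {0}"
proof -
  have "(F ^^ i) y \<in> {-1<..<1}"
    using assms orbit_closure_extension_interior closure_subset by (meson less_imp_le subsetD)
  moreover have "(F ^^ i) y \<noteq> 0"
  proof (cases "i = 0")
    case False
    then have "(F ^^ i) y \<notin> U1" using no_early_return assms by simp
    then show ?thesis using nested by auto
  qed (use assms in simp)
  ultimately show ?thesis by simp
qed

lemma orbit_deriv_nonzero_on_extension_minus_0:
  assumes "y \<in> extension" "y \<noteq> 0"
  shows "orbit_deriv F D n y \<noteq> 0"
proof (rule orbit_deriv_nonzero)
  fix i assume "i < n"
  with orbit_extension_nonzero[OF assms this] show "(F ^^ i) y \<in> II - {0}" by auto
qed

lemma critical_return_extension:
  assumes "0 \<in> extension"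
  shows "(F ^^ n) 0 \<in> U1"
proof -
  have "(F ^^ n) 0 \<in> U0" using assms extension_subset by auto
  from critical_first_entry show ?thesis
  proof
    assume "\<forall>k\<ge>1. (F ^^ k) 0 \<notin> U0"
    then show ?thesis using \<open>(F ^^ n) 0 \<in> U0\<close> n_ge_1 by blast
  next
    assume "\<exists>k\<ge>1. (F ^^ k) 0 \<in> U1 \<and> (\<forall>j. 1 \<le> j \<and> j < k \<longrightarrow> (F ^^ j) 0 \<notin> U0)"
    then obtain k where k: "1 \<le> k" "(F ^^ k) 0 \<in> U1" "\<And>j. 1 \<le> j \<Longrightarrow> j < k \<Longrightarrow> (F ^^ j) 0 \<notin> U0"
      by blast
    have "\<not> k < n" using no_early_return[OF assms k(1)] k(2) by blast
    moreover have "\<not> n < k" using k(3)[OF n_ge_1] \<open>(F ^^ n) 0 \<in> U0\<close> by blast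
    ultimately show ?thesis using k(2) by (metis linorder_neqE_nat)
  qed
qed

lemma convex_extension: "convex extension"
proof -
  obtain c d where "extension = {c<..<d}" by (rule extension_eq_Ioo)
  then show ?thesis by simp
qed

lemma segment_to_critical_point:
  assumes "0 \<in> extension" "x \<in> extension" "(F ^^ n) x \<in> U1"
  shows "(F ^^ n) ` closed_segment 0 x \<subseteq> U1"
proof -
  define lo hi where "lo = min 0 x" and "hi = max 0 x"
  have seg: "closed_segment 0 x = {lo..hi}" by (simp add: lo_def hi_def closed_segment_eq_real_ivl)
  have seg_ext: "{lo..hi} \<subseteq> extension"
    using closed_segment_subset[OF assms(1,2) convex_extension] seg by simp
  then have seg_cl: "{lo..hi} \<subseteq> closure extension" using closure_subset by blast
  have inj: "inj_on (F ^^ n) (closed_segment 0 x)"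
    unfolding seg
  proof (rule inj_on_if_deriv_nonzero)
    show "((F ^^ n) has_real_derivative orbit_deriv F D n y) (at y)" if "y \<in> {lo..hi}" for y
      by (intro has_real_derivative_extension) (use seg_cl that in blast)
    show "orbit_deriv F D n y \<noteq> 0" if "y \<in> {lo<..<hi}" for y
      using that seg_ext by (intro orbit_deriv_nonzero_on_extension_minus_0) (auto simp: lo_def hi_def)
  qed
  have cont: "continuous_on (closed_segment 0 x) (F ^^ n)"
    using continuous_on_closure_extension seg seg_cl by (metis continuous_on_subset)
  have "(F ^^ n) ` closed_segment 0 x = closed_segment ((F ^^ n) 0) ((F ^^ n) x)"
    by (rule continuous_injective_image_segment_1[OF cont inj])
  also have "\<dots> \<subseteq> U1"
    using critical_return_extension[OF assms(1)] assms(3) by (intro closed_segment_subset) auto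
  finally show ?thesis .
qed

lemma zero_notin_extension: "0 \<notin> extension"
proof
  \<comment> \<open>the component of extension \<inter> (F^n)^-1(U1) containing W would also contain 0 and,
    having constant return time n, would contradict the maximality of the branch W\<close>
  assume zero: "0 \<in> extension"
  define x0 where "x0 = (SOME x. x \<in> W)"
  have "x0 \<in> W" unfolding x0_def by (rule some_in_W)
  then have x0: "x0 \<in> W" "x0 \<in> extension" "(F ^^ n) x0 \<in> U1"
    using W_subset_extension W_first_return(2) by blast+
  define V where "V = extension \<inter> (F ^^ n) -` U1"
  have "continuous_on extension (F ^^ n)"
    by (rule continuous_on_subset[OF continuous_on_closure_extension closure_subset])
  then have "open V"
    unfolding V_def by (rule continuous_open_preimage[OF _ open_extension open_greaterThanLessThan])
  moreover have "bdd_below V" "bdd_above V"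
    using extension_subset unfolding V_def by (auto intro: bdd_below_mono bdd_above_mono)
  moreover have "x0 \<in> V" using x0 by (simp add: V_def)
  ultimately obtain c d where C: "connected_component_set V x0 = {c<..<d}" "c < d"
    by (rule connected_component_eq_Ioo)
  have "closed_segment 0 x0 \<subseteq> V"
    using closed_segment_subset[OF zero x0(2) convex_extension] segment_to_critical_point[OF zero x0(2,3)]
    by (auto simp: V_def)
  then have "closed_segment 0 x0 \<subseteq> connected_component_set V x0"
    by (intro connected_component_maximal) auto
  then have zero_C: "0 \<in> connected_component_set V x0" by auto
  have "W \<subseteq> connected_component_set V x0"
  proof (rule connected_component_maximal[OF x0(1)])
    show "connected W" by (fact connected_W)
    show "W \<subseteq> V" using W_subset_extension W_first_return(2) by (auto simp: V_def)
  qed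
  moreover have "const_ret_interval F U1 (connected_component_set V x0)"
  proof (rule const_ret_interval_extension)
    show "open_interval (connected_component_set V x0)" using C by (auto simp: open_interval_def)
    show "connected_component_set V x0 \<subseteq> extension"
      using connected_component_subset[of V x0] by (auto simp: V_def)
    show "(F ^^ n) y \<in> U1" if "y \<in> connected_component_set V x0" for y
      using that connected_component_subset[of V x0] by (auto simp: V_def)
  qed
  ultimately have "connected_component_set V x0 = W" by (intro W_maximal)
  with zero_C zero_notin_W show False by simp
qed

lemma orbit_deriv_extension_nonzero: "y \<in> extension \<Longrightarrow> orbit_deriv F D n y \<noteq> 0"
  using orbit_deriv_nonzero_on_extension_minus_0 zero_notin_extension by blast

lemma inj_on_closure_extension: "inj_on (F ^^ n) (closure extension)"
proof -
  obtain c d where cd: "extension = {c<..<d}" "c < d" by (rule extension_eq_Ioo)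
  then have cl: "closure extension = {c..d}" by simp
  have "inj_on (F ^^ n) {c..d}"
  proof (rule inj_on_if_deriv_nonzero)
    show "((F ^^ n) has_real_derivative orbit_deriv F D n y) (at y)" if "y \<in> {c..d}" for y
      using that cl by (intro has_real_derivative_extension) simp
    show "orbit_deriv F D n y \<noteq> 0" if "y \<in> {c<..<d}" for y
      using that cd by (intro orbit_deriv_extension_nonzero) simp
  qed
  then show ?thesis by (simp only: cl)
qed

lemma image_closure_extension_eq: "(F ^^ n) ` closure extension = {a0..b0}"
  and image_frontier_extension_eq: "(F ^^ n) ` frontier extension = {a0, b0}"
proof -
  obtain c d where cd: "extension = {c<..<d}" "c < d" by (rule extension_eq_Ioo)
  have cl: "closure extension = {c..d}" and fr: "frontier extension = {c, d}"
    using cd by (simp_all add: frontier_def interior_open)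
  have "(F ^^ n) c \<noteq> (F ^^ n) d"
  proof
    assume "(F ^^ n) c = (F ^^ n) d"
    then have "c = d" using inj_onD[OF inj_on_closure_extension] cd(2) cl by simp
    with cd(2) show False by simp
  qed
  moreover have "(F ^^ n) c \<in> {a0, b0}" "(F ^^ n) d \<in> {a0, b0}"
    using image_frontier_extension fr by blast+
  ultimately have ends: "{(F ^^ n) c, (F ^^ n) d} = {a0, b0}" by auto
  then show "(F ^^ n) ` frontier extension = {a0, b0}" by (simp add: fr)
  have seg: "closed_segment c d = {c..d}" using cd(2) by (simp add: closed_segment_eq_real_ivl)
  have "(F ^^ n) ` closed_segment c d = closed_segment ((F ^^ n) c) ((F ^^ n) d)"
    using continuous_on_closure_extension inj_on_closure_extension
    by (intro continuous_injective_image_segment_1) (simp_all add: seg cl)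
  also have "\<dots> = {a0..b0}"
    using ends nested by (auto simp: closed_segment_eq_real_ivl doubleton_eq_iff)
  finally show "(F ^^ n) ` closure extension = {a0..b0}" by (simp only: seg cl)
qed

lemma bij_betw_extension: "bij_betw (F ^^ n) extension U0"
proof -
  have ext: "extension = closure extension - frontier extension"
    using open_extension by (auto simp: frontier_def interior_open closure_subset[THEN subsetD])
  have "(F ^^ n) ` (closure extension - frontier extension)
      = (F ^^ n) ` closure extension - (F ^^ n) ` frontier extension"
    by (rule inj_on_image_set_diff[OF inj_on_closure_extension]) (auto simp: frontier_def)
  then have "(F ^^ n) ` extension = (F ^^ n) ` closure extension - (F ^^ n) ` frontier extension"
    by (simp only: ext[symmetric])
  also have "\<dots> = U0"
    using image_closure_extension_eq image_frontier_extension_eq nested by auto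
  finally show ?thesis
    unfolding bij_betw_def using inj_on_subset[OF inj_on_closure_extension closure_subset] by blast
qed

lemma frontier_extension_between:
  assumes "connected C" "0 \<in> C" "y \<in> C" "y \<in> extension"
  shows "\<exists>e\<in>frontier extension. e \<in> C"
proof -
  obtain c d where cd: "extension = {c<..<d}" "c < d" by (rule extension_eq_Ioo)
  then have fr: "frontier extension = {c, d}" by (simp add: frontier_def interior_open)
  show ?thesis
  proof (cases "0 < y")
    case True
    then have "c \<in> {0..y}" using assms(4) zero_notin_extension cd by (auto simp: not_less)
    then show ?thesis using connected_contains_Icc[OF assms(1-3)] fr by blast
  next
    case False
    then have "d \<in> {y..0}" using assms(4) zero_notin_extension cd by (auto simp: not_less)
    then show ?thesis using connected_contains_Icc[OF assms(1,3,2)] fr by blast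
  qed
qed

lemma extension_disjoint_central:
  assumes C: "is_branch F U1 C" "0 \<in> C"
  shows "extension \<inter> C = {}"
proof (rule ccontr)
  assume "extension \<inter> C \<noteq> {}"
  then obtain y where y: "y \<in> extension" "y \<in> C" by blast
  from C obtain m where C_conn: "connected C"
    and C_ret: "\<And>z. z \<in> C \<Longrightarrow> returns F U1 z \<and> ret_time F U1 z = m"
    by (auto simp: is_branch_def const_ret_interval_def open_interval_def)
  have "n \<le> m"
  proof (rule ccontr)
    assume "\<not> n \<le> m"
    moreover have "1 \<le> m" "(F ^^ m) y \<in> U1" using returns_ret_time[of F U1 y] C_ret[OF y(2)] by auto
    ultimately show False using no_early_return[OF y(1)] by auto
  qed
  obtain e where e_fr: "e \<in> frontier extension" and e: "e \<in> C"
    using frontier_extension_between[OF C_conn C(2) y(2,1)] by blast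
  have Fe: "(F ^^ n) e \<in> {a0, b0}" by (rule image_frontier_extension[OF e_fr])
  have "(F ^^ m) e \<in> U1" using returns_ret_time[of F U1 e] C_ret[OF e] by auto
  moreover have "(F ^^ m) e = (F ^^ (m - n)) ((F ^^ n) e)"
    using \<open>n \<le> m\<close> funpow_add[of "m - n" n F] by simp
  ultimately show False
  proof (cases "m = n")
    case False
    with \<open>n \<le> m\<close> have "1 \<le> m - n" by simp
    from boundary_never_enters[OF this, of "(F ^^ n) e"] Fe
    have "(F ^^ (m - n)) ((F ^^ n) e) \<notin> U0" by auto
    with \<open>(F ^^ m) e \<in> U1\<close> \<open>(F ^^ m) e = (F ^^ (m - n)) ((F ^^ n) e)\<close> nested show False by auto
  qed (use Fe nested in auto)
qed

lemma convex_on_extension: "convex_on extension (\<lambda>x. inverse (sqrt \<bar>orbit_deriv F D n x\<bar>))"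
proof (rule convex_on_inverse_sqrt_orbit_deriv)
  show "open extension" by (fact open_extension)
  show "connected extension" using convex_extension by (rule convex_connected)
  show "(F ^^ i) x \<in> {-1<..<1} - {0}" if "x \<in> extension" "i < n" for x i
    using orbit_extension_nonzero[OF that(1) _ that(2)] zero_notin_extension that(1) by blast
qed

lemma expansion_on_extension:
  assumes \<theta>: "\<theta> > 0" "b1 - a1 \<le> \<theta> * setdist U1 {a0, b0}"
    and x: "x \<in> extension" "(F ^^ n) x \<in> U1"
  shows "1 / \<theta> \<le> \<bar>orbit_deriv F D n x\<bar>"
proof -
  obtain c d where cd: "extension = {c<..<d}" "c < d" "a1 \<le> c" "d \<le> b1" by (rule extension_eq_Ioo)
  have fr: "frontier extension = {c, d}" using cd by (auto simp: frontier_def interior_open)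
  define L where "L = b1 - a1"
  have "L > 0" using nested by (simp add: L_def)
  have gap: "L / \<theta> \<le> \<bar>(F ^^ n) e - (F ^^ n) x\<bar>" if "e \<in> {c, d}" for e
  proof -
    have "(F ^^ n) e \<in> {a0, b0}" using that fr image_frontier_extension by blast
    then have "setdist U1 {a0, b0} \<le> dist ((F ^^ n) x) ((F ^^ n) e)"
      by (rule setdist_le_dist[OF x(2)])
    then have "setdist U1 {a0, b0} \<le> \<bar>(F ^^ n) e - (F ^^ n) x\<bar>"
      by (simp add: dist_real_def abs_minus_commute)
    then have "\<theta> * setdist U1 {a0, b0} \<le> \<theta> * \<bar>(F ^^ n) e - (F ^^ n) x\<bar>"
      using \<theta>(1) by (intro mult_left_mono) auto
    then have "L \<le> \<theta> * \<bar>(F ^^ n) e - (F ^^ n) x\<bar>" using \<theta>(2) by (simp add: L_def)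
    then show ?thesis using \<theta>(1) by (simp add: pos_divide_le_eq mult.commute)
  qed
  let ?h = "\<lambda>y. inverse (sqrt \<bar>orbit_deriv F D n y\<bar>)"
  have h_le: "\<bar>orbit_deriv F D n y\<bar> \<le> \<bar>orbit_deriv F D n x\<bar>" if "y \<in> extension" "?h x \<le> ?h y" for y
    using that x(1) orbit_deriv_extension_nonzero by (simp add: inverse_le_iff_le)
  have deriv: "((F ^^ n) has_real_derivative orbit_deriv F D n y) (at y)" if "y \<in> {c..d}" for y
    using that cd closure_greaterThanLessThan[OF cd(2)] by (intro has_real_derivative_extension) simp
  from convex_on_Ioo_one_side_ge[OF convex_on_extension[unfolded cd(1)] x(1)[unfolded cd(1)]]
  have "L / \<theta> \<le> \<bar>orbit_deriv F D n x\<bar> * L"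
  proof
    assume "\<forall>y\<in>{x<..<d}. ?h x \<le> ?h y"
    then have "\<bar>(F ^^ n) d - (F ^^ n) x\<bar> \<le> \<bar>orbit_deriv F D n x\<bar> * (d - x)"
      using x(1) cd h_le deriv by (intro MVT_abs_le[where g' = "orbit_deriv F D n"]) auto
    also have "\<dots> \<le> \<bar>orbit_deriv F D n x\<bar> * L"
      using x(1) cd by (intro mult_left_mono) (auto simp: L_def)
    finally show ?thesis using gap[of d] by simp
  next
    assume "\<forall>y\<in>{c<..<x}. ?h x \<le> ?h y"
    then have "\<bar>(F ^^ n) x - (F ^^ n) c\<bar> \<le> \<bar>orbit_deriv F D n x\<bar> * (x - c)"
      using x(1) cd h_le deriv by (intro MVT_abs_le[where g' = "orbit_deriv F D n"]) auto
    also have "\<dots> \<le> \<bar>orbit_deriv F D n x\<bar> * L"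
      using x(1) cd by (intro mult_left_mono) (auto simp: L_def)
    finally show ?thesis using gap[of c] by (simp add: abs_minus_commute)
  qed
  then show ?thesis using \<open>L > 0\<close> \<theta>(1) by (simp add: field_simps)
qed

lemma first_return_has_derivative:
  assumes "x \<in> W"
  shows "(first_return F U1 has_real_derivative orbit_deriv F D n x) (at x)"
proof -
  have "((F ^^ n) has_real_derivative orbit_deriv F D n x) (at x)"
    using assms W_subset_extension closure_subset by (intro has_real_derivative_extension) blast
  then show ?thesis
    by (rule has_field_derivative_transform_within_open[OF _ open_W assms])
      (simp add: first_return_def ret_time_W)
qed

lemma open_interval_extension: "open_interval extension"
proof -
  obtain c d where "extension = {c<..<d}" "c < d" by (rule extension_eq_Ioo)
  then show ?thesis unfolding open_interval_def by blast
qed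

lemma diffeomorphic_extension:
  "\<exists>What. open_interval What \<and> W \<subseteq> What \<and> What \<subseteq> U1 \<and> bij_betw (F ^^ n) What U0 \<and>
     (\<forall>x\<in>What. \<exists>d. ((F ^^ n) has_real_derivative d) (at x) \<and> d \<noteq> 0) \<and>
     (\<forall>C. is_branch F U1 C \<and> 0 \<in> C \<longrightarrow> What \<inter> C = {})"
proof (intro exI[of _ extension] conjI ballI allI impI)
  show "open_interval extension" "W \<subseteq> extension" "bij_betw (F ^^ n) extension U0"
    by (fact open_interval_extension W_subset_extension bij_betw_extension)+
  show "extension \<subseteq> U1" using extension_subset by blast
  show "extension \<inter> C = {}" if "is_branch F U1 C \<and> 0 \<in> C" for C
    using that extension_disjoint_central by blast
  fix x assume x: "x \<in> extension"
  have "((F ^^ n) has_real_derivative orbit_deriv F D n x) (at x)"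
    using x closure_subset by (blast intro: has_real_derivative_extension)
  moreover have "orbit_deriv F D n x \<noteq> 0" using x by (rule orbit_deriv_extension_nonzero)
  ultimately show "\<exists>d. ((F ^^ n) has_real_derivative d) (at x) \<and> d \<noteq> 0" by blast
qed

lemma first_return_expanding:
  assumes "\<theta> > 0" "b1 - a1 \<le> \<theta> * setdist U1 {a0, b0}" and x: "x \<in> W"
  shows "\<exists>d. (first_return F U1 has_real_derivative d) (at x) \<and> 1 / \<theta> \<le> \<bar>d\<bar>"
  using first_return_has_derivative[OF x] expansion_on_extension[OF assms(1,2)] x W_subset_extension W_first_return(2)
  by blast

end

lemma S_unimodal_first_return_to_nice_interval:
  fixes F :: "real \<Rightarrow> real" and \<theta> a0 b0 a1 b1 :: real
  assumes SU: "S_unimodal F" and \<theta>: "0 < \<theta>" "\<theta> \<le> 1/5"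
    and nested: "a1 < 0" "0 < b1" "a0 \<le> a1" "b1 \<le> b0" "-\<theta> \<le> a0" "b0 \<le> \<theta>"
    and nice: "\<forall>k\<ge>1. \<forall>p\<in>{a0, b0, a1, b1}. (F ^^ k) p \<notin> {a0<..<b0}"
    and small: "b1 - a1 \<le> \<theta> * setdist {a1<..<b1} {a0, b0}"
    and critical: "(\<forall>k\<ge>1. (F ^^ k) 0 \<notin> {a0<..<b0}) \<or>
      (\<exists>k\<ge>1. (F ^^ k) 0 \<in> {a1<..<b1} \<and> (\<forall>j. 1 \<le> j \<and> j < k \<longrightarrow> (F ^^ j) 0 \<notin> {a0<..<b0}))"
  shows "(\<forall>W n. is_branch F {a1<..<b1} W \<and> 0 \<notin> W \<and> (\<forall>x\<in>W. ret_time F {a1<..<b1} x = n) \<longrightarrow>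
            (\<exists>What. open_interval What \<and> W \<subseteq> What \<and> What \<subseteq> {a1<..<b1} \<and>
               bij_betw (F ^^ n) What {a0<..<b0} \<and>
               (\<forall>x\<in>What. \<exists>d. ((F ^^ n) has_real_derivative d) (at x) \<and> d \<noteq> 0) \<and>
               (\<forall>C. is_branch F {a1<..<b1} C \<and> 0 \<in> C \<longrightarrow> What \<inter> C = {}))) \<and>
         (\<forall>W. is_branch F {a1<..<b1} W \<and> 0 \<notin> W \<longrightarrow>
            (\<forall>x\<in>W. \<exists>d. (first_return F {a1<..<b1} has_real_derivative d) (at x) \<and> \<bar>d\<bar> \<ge> 5))"
proof -
  obtain D where D: "s_unimodal_map F D" by (rule S_unimodal_imp_s_unimodal_map[OF SU])
  have branch: "noncentral_branch F D a0 b0 a1 b1 W n"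
    if "is_branch F {a1<..<b1} W" "0 \<notin> W" "\<And>x. x \<in> W \<Longrightarrow> ret_time F {a1<..<b1} x = n" for W n
  proof (rule noncentral_branch.intro[OF D], rule noncentral_branch_axioms.intro)
    show "-1 < a0" "a0 \<le> a1" "a1 < 0" "0 < b1" "b1 \<le> b0" "b0 < 1" using \<theta> nested by simp_all
    show "(F ^^ k) p \<notin> {a0<..<b0}" if "1 \<le> k" "p \<in> {a0, b0, a1, b1}" for k p
      using nice that by blast
  qed (use that critical in simp_all)
  have "5 \<le> 1 / \<theta>" using \<theta> by (simp add: field_simps)
  show ?thesis
  proof (intro conjI allI impI ballI)
    fix W n assume "is_branch F {a1<..<b1} W \<and> 0 \<notin> W \<and> (\<forall>x\<in>W. ret_time F {a1<..<b1} x = n)"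
    then show "\<exists>What. open_interval What \<and> W \<subseteq> What \<and> What \<subseteq> {a1<..<b1} \<and>
               bij_betw (F ^^ n) What {a0<..<b0} \<and>
               (\<forall>x\<in>What. \<exists>d. ((F ^^ n) has_real_derivative d) (at x) \<and> d \<noteq> 0) \<and>
               (\<forall>C. is_branch F {a1<..<b1} C \<and> 0 \<in> C \<longrightarrow> What \<inter> C = {})"
      using noncentral_branch.diffeomorphic_extension[OF branch] by blast
  next
    fix W x assume W: "is_branch F {a1<..<b1} W \<and> 0 \<notin> W" and x: "x \<in> W"
    then obtain n where "\<forall>x\<in>W. ret_time F {a1<..<b1} x = n"
      unfolding is_branch_def const_ret_interval_def by blast
    with W have "noncentral_branch F D a0 b0 a1 b1 W n" by (intro branch) simp_all
    from noncentral_branch.first_return_expanding[OF this \<theta>(1) small x] \<open>5 \<le> 1 / \<theta>\<close>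
    show "\<exists>d. (first_return F {a1<..<b1} has_real_derivative d) (at x) \<and> \<bar>d\<bar> \<ge> 5"
      by (meson order_trans)
  qed
qed

theorem mainTheorem11:
  fixes f :: "real \<Rightarrow> real \<Rightarrow> real" and \<epsilon> :: real
  assumes "misiurewicz_rooted_family f \<epsilon>"
  shows "\<exists>\<theta>\<^sub>0>0. \<forall>\<theta>. 0 < \<theta> \<and> \<theta> < \<theta>\<^sub>0 \<longrightarrow>
    (\<exists>t\<^sub>1>0. \<forall>t\<in>{0..\<epsilon>}. t < t\<^sub>1 \<longrightarrow>
      (\<forall>a0 b0 a1 b1. a0 < b0 \<and> a1 < b1 \<and>
         a1 < 0 \<and> 0 < b1 \<and> a0 \<le> a1 \<and> b1 \<le> b0 \<and> -\<theta> \<le> a0 \<and> b0 \<le> \<theta> \<and>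
         f t a0 = f t b0 \<and> preperiodic (f t) (f t a0) \<and>
         f t a1 = f t b1 \<and> preperiodic (f t) (f t a1) \<and>
         (\<forall>k\<ge>1. \<forall>p\<in>{a0, b0, a1, b1}. (f t ^^ k) p \<notin> {a0<..<b0}) \<and>
         b1 - a1 \<le> \<theta> * setdist {a1<..<b1} {a0, b0} \<and>
         ((\<forall>k\<ge>1. (f t ^^ k) 0 \<notin> {a0<..<b0}) \<or>
          (\<exists>k\<ge>1. (f t ^^ k) 0 \<in> {a1<..<b1} \<and> (\<forall>j. 1 \<le> j \<and> j < k \<longrightarrow> (f t ^^ j) 0 \<notin> {a0<..<b0})))
       \<longrightarrow>
         (\<forall>W n. is_branch (f t) {a1<..<b1} W \<and> 0 \<notin> W \<and>
                 (\<forall>x\<in>W. ret_time (f t) {a1<..<b1} x = n) \<longrightarrow>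
            (\<exists>What. open_interval What \<and> W \<subseteq> What \<and> What \<subseteq> {a1<..<b1} \<and>
               bij_betw (f t ^^ n) What {a0<..<b0} \<and>
               (\<forall>x\<in>What. \<exists>d. ((f t ^^ n) has_real_derivative d) (at x) \<and> d \<noteq> 0) \<and>
               (\<forall>C. is_branch (f t) {a1<..<b1} C \<and> 0 \<in> C \<longrightarrow> What \<inter> C = {}))) \<and>
         (\<forall>W. is_branch (f t) {a1<..<b1} W \<and> 0 \<notin> W \<longrightarrow>
            (\<forall>x\<in>W. \<exists>d. (first_return (f t) {a1<..<b1} has_real_derivative d) (at x) \<and> \<bar>d\<bar> \<ge> 5))))"
proof (rule exI[of _ "1/5"], intro conjI allI impI, goal_cases)
  case (2 \<theta>)
  then have \<theta>: "0 < \<theta>" "\<theta> \<le> 1/5" by simp_all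
  have fam: "S_unimodal (f t)" if "t \<in> {0..\<epsilon>}" for t
    using assms that by (simp add: misiurewicz_rooted_family_def)
  show ?case
    by (rule exI[of _ 1], rule conjI, simp, intro ballI impI allI, elim conjE)
      (rule S_unimodal_first_return_to_nice_interval[OF fam \<theta>])
qed simp

end
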